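(* For every vector space $\mathcal X$ over $\mathbb K$, the exponential vector space $\mathscr L(\mathcal X)$ has a basis, i.e. $\mathscr L(\mathcal X)\smallsetminus[\mathscr L(\mathcal X)]_0$ has a basis.
   Context: $\mathbb K$ is $\mathbb R$ or $\mathbb C$. An exponential vector space (evs) over a field $K$ is a partially ordered set $(X,\leq)$ with a binary operation $+$ on $X$ and a map $K\times X\to X$, $(\alpha,x)\mapsto \alpha x$, such that: (A1) $(X,+)$ is a commutative semigroup with identity $\theta$; (A2) $x\leq y$ implies $x+z\leq y+z$ and $\alpha x\leq \alpha y$ for all $z\in X$, $\alpha\in K$; (A3) $\alpha(x+y)=\alpha x+\alpha y$, $\alpha(\beta x)=(\alpha\beta)x$, $(\alpha+\beta)x\leq \alpha x+\beta x$, $1x=x$; (A4) $\alpha x=\theta$ iff $\alpha=0$ or $x=\theta$; (A5) $x+(-1)x=\theta$ iff $x\in X_0$, where $X_0:=\{z\in X: y\not\leq z \text{ for all } y\in X\smallsetminus\{z\}\}$ (the set of minimal elements); (A6) for each $x\in X$ there is $p\in X_0$ with $p\leq x$. $\mathscr L(\mathcal X)$ is the set of all linear subspaces of $\mathcal X$ with $\mathcal X_1+\mathcal X_2:=\mathrm{span}(\mathcal X_1\cup\mathcal X_2)$, $\alpha\cdot\mathcal X_1:=\mathcal X_1$ if $\alpha\neq0$ and $0\cdot\mathcal X_1:=\{\theta\}$, and order given by inclusion; it is an evs over $\mathbb K$ with primitive space $\{\{\theta\}\}$. For $x\in X\smallsetminus X_0$ let $L(x):=\{z\in X: z\geq \alpha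 x+p \text{ for some } \alpha\in K\smallsetminus\{0\},\ p\in X_0\}$. A subset $B\subseteq X\smallsetminus X_0$ generates $X\smallsetminus X_0$ if $X\smallsetminus X_0=\bigcup_{b\in B}L(b)$. Elements $x,y\in X\smallsetminus X_0$ are orderly dependent if $x\in L(y)$ or $y\in L(x)$, and orderly independent otherwise; $B$ is orderly independent if any two distinct members are orderly independent. A basis of $X\smallsetminus X_0$ is an orderly independent generating subset. *)

theory Defs
  imports "HOL-Analysis.Analysis"
begin

definition evs_prim :: "'x set \<Rightarrow> ('x \<Rightarrow> 'x \<Rightarrow> bool) \<Rightarrow> 'x set" where
  "evs_prim X le = {z \<in> X. \<forall>y \<in> X - {z}. \<not> le y z}"

definition evs_L :: "'x set \<Rightarrow> ('x \<Rightarrow> 'x \<Rightarrow> bool) \<Rightarrow> ('x \<Rightarrow> 'x \<Rightarrow> 'x)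
    \<Rightarrow> ('k::zero \<Rightarrow> 'x \<Rightarrow> 'x) \<Rightarrow> 'x \<Rightarrow> 'x set" where
  "evs_L X le pl sm x =
     {z \<in> X. \<exists>\<alpha>. \<alpha> \<noteq> 0 \<and> (\<exists>p \<in> evs_prim X le. le (pl (sm \<alpha> x) p) z)}"

definition evs_generates :: "'x set \<Rightarrow> ('x \<Rightarrow> 'x \<Rightarrow> bool) \<Rightarrow> ('x \<Rightarrow> 'x \<Rightarrow> 'x)
    \<Rightarrow> ('k::zero \<Rightarrow> 'x \<Rightarrow> 'x) \<Rightarrow> 'x set \<Rightarrow> bool" where
  "evs_generates X le pl sm B \<longleftrightarrow>
     B \<subseteq> X - evs_prim X le \<and>
     X - evs_prim X le = (\<Union>b \<in> B. evs_L X le pl sm b)"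

definition evs_orderly_independent :: "'x set \<Rightarrow> ('x \<Rightarrow> 'x \<Rightarrow> bool) \<Rightarrow> ('x \<Rightarrow> 'x \<Rightarrow> 'x)
    \<Rightarrow> ('k::zero \<Rightarrow> 'x \<Rightarrow> 'x) \<Rightarrow> 'x \<Rightarrow> 'x \<Rightarrow> bool" where
  "evs_orderly_independent X le pl sm x y \<longleftrightarrow>
     \<not> (x \<in> evs_L X le pl sm y \<or> y \<in> evs_L X le pl sm x)"

definition evs_basis :: "'x set \<Rightarrow> ('x \<Rightarrow> 'x \<Rightarrow> bool) \<Rightarrow> ('x \<Rightarrow> 'x \<Rightarrow> 'x)
    \<Rightarrow> ('k::zero \<Rightarrow> 'x \<Rightarrow> 'x) \<Rightarrow> 'x set \<Rightarrow> bool" where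
  "evs_basis X le pl sm B \<longleftrightarrow>
     B \<subseteq> X - evs_prim X le \<and>
     (\<forall>x \<in> B. \<forall>y \<in> B. x \<noteq> y \<longrightarrow> evs_orderly_independent X le pl sm x y) \<and>
     evs_generates X le pl sm B"

definition Lsub_carrier :: "('k::comm_ring_1 \<Rightarrow> 'v \<Rightarrow> 'v::ab_group_add) \<Rightarrow> 'v set set" where
  "Lsub_carrier sc = {S. module.subspace sc S}"

definition Lsub_le :: "'v set \<Rightarrow> 'v set \<Rightarrow> bool" where
  "Lsub_le S T \<longleftrightarrow> S \<subseteq> T"

definition Lsub_plus :: "('k::comm_ring_1 \<Rightarrow> 'v \<Rightarrow> 'v::ab_group_add) \<Rightarrow> 'v set \<Rightarrow> 'v set \<Rightarrow> 'v set" where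
  "Lsub_plus sc S T = module.span sc (S \<union> T)"

definition Lsub_smult :: "'k::zero \<Rightarrow> 'v::zero set \<Rightarrow> 'v set" where
  "Lsub_smult \<alpha> S = (if \<alpha> = 0 then {0} else S)"

definition Lsub_has_basis :: "('k::field \<Rightarrow> 'v \<Rightarrow> 'v::ab_group_add) \<Rightarrow> bool" where
  "Lsub_has_basis sc \<longleftrightarrow>
     (\<exists>B. evs_basis (Lsub_carrier sc) Lsub_le (Lsub_plus sc)
            (Lsub_smult :: 'k \<Rightarrow> 'v set \<Rightarrow> 'v set) B)"

end

theory Submission
  imports Defs
begin

text \<open>The only primitive subspace is \<open>{0}\<close>, and since \<open>\<alpha> \<cdot> x + {0} = x\<close> for \<open>\<alpha> \<noteq> 0\<close>,
  \<open>L(x)\<close> is just the set of subspaces containing \<open>x\<close>. The lines \<open>span {v}\<close>, \<open>v \<noteq> 0\<close>, are the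
  minimal nonzero subspaces: every nonzero subspace contains one, and two distinct lines
  are incomparable. Hence the lines form a basis, over any field.\<close>

abbreviation Lsub_L :: "('k::field \<Rightarrow> 'v::ab_group_add \<Rightarrow> 'v) \<Rightarrow> 'v set \<Rightarrow> 'v set set" where
  "Lsub_L sc \<equiv> evs_L (Lsub_carrier sc) Lsub_le (Lsub_plus sc) (Lsub_smult :: 'k \<Rightarrow> 'v set \<Rightarrow> 'v set)"

definition lines :: "('k::field \<Rightarrow> 'v::ab_group_add \<Rightarrow> 'v) \<Rightarrow> 'v set set" where
  "lines sc = {module.span sc {v} | v. v \<noteq> 0}"

context vector_space
begin

lemma Lsub_prim_eq: "evs_prim (Lsub_carrier scale) Lsub_le = {{0}}"
proof (rule set_eqI, rule iffI)
  fix z assume "z \<in> evs_prim (Lsub_carrier scale) Lsub_le"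
  then have "subspace z" and minimal: "\<forall>y. subspace y \<and> y \<noteq> z \<longrightarrow> \<not> y \<subseteq> z"
    unfolding evs_prim_def Lsub_carrier_def Lsub_le_def by auto
  then have "{0} \<subseteq> z" using subspace_0 by simp
  then show "z \<in> {{0}}" using minimal subspace_single_0 by blast
next
  fix z assume "z \<in> {{0::'b}}"
  then show "z \<in> evs_prim (Lsub_carrier scale) Lsub_le"
    unfolding evs_prim_def Lsub_carrier_def Lsub_le_def using subspace_0 subspace_single_0 by blast
qed

lemma Lsub_nonprim_eq:
  "Lsub_carrier scale - evs_prim (Lsub_carrier scale) Lsub_le = {z. subspace z \<and> z \<noteq> {0}}"
  unfolding Lsub_prim_eq by (auto simp: Lsub_carrier_def)

lemma Lsub_L_eq:
  assumes "subspace x"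
  shows "Lsub_L scale x = {z. subspace z \<and> x \<subseteq> z}"
proof -
  have plus_zero: "Lsub_plus scale (Lsub_smult \<alpha> x) {0} = x" if "\<alpha> \<noteq> 0" for \<alpha> :: 'a
    using that assms by (simp add: Lsub_plus_def Lsub_smult_def)
  have "Lsub_L scale x = {z \<in> Lsub_carrier scale. \<exists>\<alpha>::'a. \<alpha> \<noteq> 0 \<and> x \<subseteq> z}"
    unfolding evs_L_def Lsub_prim_eq Lsub_le_def by (simp add: plus_zero cong: conj_cong)
  also have "\<dots> = {z. subspace z \<and> x \<subseteq> z}"
    unfolding Lsub_carrier_def using one_neq_zero by blast
  finally show ?thesis .
qed

lemma span_singleton_subset_imp_eq:
  assumes "v \<noteq> 0" "w \<noteq> 0" "span {v} \<subseteq> span {w}"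
  shows "span {v} = span {w}"
proof -
  have "v \<in> span {w}" using assms(3) span_base by blast
  then obtain c where c: "v = scale c w" by (auto simp: span_singleton)
  then have "c \<noteq> 0" using assms(1) by auto
  then have "w = scale (inverse c) v" using c by simp
  then have "w \<in> span {v}" by (auto simp: span_singleton)
  then have "span {w} \<subseteq> span {v}" by (simp add: span_minimal)
  then show ?thesis using assms(3) by auto
qed

lemma lines_nonprim: "lines scale \<subseteq> Lsub_carrier scale - evs_prim (Lsub_carrier scale) Lsub_le"
proof
  fix b assume "b \<in> lines scale"
  then obtain v where "v \<noteq> 0" "b = span {v}" unfolding lines_def by blast
  then have "subspace b" "v \<in> b" using span_base by auto
  with \<open>v \<noteq> 0\<close> show "b \<in> Lsub_carrier scale - evs_prim (Lsub_carrier scale) Lsub_le"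
    unfolding Lsub_nonprim_eq by blast
qed

lemma lines_orderly_independent:
  assumes "x \<in> lines scale" "y \<in> lines scale" "x \<noteq> y"
  shows "evs_orderly_independent (Lsub_carrier scale) Lsub_le (Lsub_plus scale)
           (Lsub_smult :: 'a \<Rightarrow> 'b set \<Rightarrow> 'b set) x y"
proof -
  obtain v w where "v \<noteq> 0" "x = span {v}" "w \<noteq> 0" "y = span {w}"
    using assms(1,2) unfolding lines_def by blast
  then have "\<not> x \<subseteq> y" "\<not> y \<subseteq> x" "subspace x" "subspace y"
    using span_singleton_subset_imp_eq assms(3) by (metis subset_antisym subspace_span)+
  then show ?thesis unfolding evs_orderly_independent_def by (simp add: Lsub_L_eq)
qed

lemma lines_generate:
  "evs_generates (Lsub_carrier scale) Lsub_le (Lsub_plus scale)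
     (Lsub_smult :: 'a \<Rightarrow> 'b set \<Rightarrow> 'b set) (lines scale)"
proof -
  have "z \<in> (\<Union>b \<in> lines scale. Lsub_L scale b)" if z: "subspace z" "z \<noteq> {0}" for z
  proof -
    obtain v where "v \<in> z" "v \<noteq> 0" using z subspace_0 by blast
    then have "span {v} \<in> lines scale" "span {v} \<subseteq> z"
      using z(1) span_minimal unfolding lines_def by blast+
    then show ?thesis using z(1) Lsub_L_eq[of "span {v}"] by blast
  qed
  moreover have "subspace z \<and> z \<noteq> {0}" if "b \<in> lines scale" "z \<in> Lsub_L scale b" for b z
  proof -
    have "subspace b" "b \<noteq> {0}" using that(1) lines_nonprim unfolding Lsub_nonprim_eq by blast+
    then show ?thesis using that(2) Lsub_L_eq subspace_0 by blast
  qed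
  ultimately show ?thesis
    unfolding evs_generates_def using lines_nonprim unfolding Lsub_nonprim_eq by blast
qed

lemma Lsub_has_basis: "Lsub_has_basis scale"
  unfolding Lsub_has_basis_def evs_basis_def
  using lines_nonprim lines_orderly_independent lines_generate by blast

end

theorem mainTheorem12:
  fixes scaleR' :: "real \<Rightarrow> 'v::ab_group_add \<Rightarrow> 'v"
    and scaleC' :: "complex \<Rightarrow> 'w::ab_group_add \<Rightarrow> 'w"
  shows "(vector_space scaleR' \<longrightarrow> Lsub_has_basis scaleR')
       \<and> (vector_space scaleC' \<longrightarrow> Lsub_has_basis scaleC')"
  by (simp add: vector_space.Lsub_has_basis)

end
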